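(* Let $r>5$ with $r\not\equiv 0\pmod 3$, and let $C_r$ be the directed cycle of length $r$. If there exist positive integers $b,k$ with $k<4b$ such that $C_r$ admits a $b$-fold oriented $k$-coloring, then $r$ is divisible by $4q+3$ for some natural number $q$.
   Context: The directed cycle $C_r$ has vertices $u_i$, $i\in\mathbb{Z}/r\mathbb{Z}$, and arcs $u_iu_{i+1}$. For a set $S$ of $k$ colors, a $b$-fold oriented $k$-coloring of an oriented graph $G$ is a map $f$ from $V(G)$ to the $b$-element subsets of $S$ such that (i) $f(x)\cap f(y)=\emptyset$ for every arc $xy$, and (ii) for all arcs $xy, zw$, $f(x)\cap f(w)\neq\emptyset$ implies $f(y)\cap f(z)=\emptyset$. (A $b$-fold oriented $k$-coloring with $k/b<4$ is called miser in the paper.) *)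

theory Defs
  imports Main
begin

definition cycle_vertices :: "nat \<Rightarrow> nat set" where
  "cycle_vertices r = {..<r}"

definition cycle_arcs :: "nat \<Rightarrow> (nat \<times> nat) set" where
  "cycle_arcs r = {(i, (i + 1) mod r) | i. i < r}"

definition b_fold_oriented_coloring ::
  "'a set \<Rightarrow> ('a \<times> 'a) set \<Rightarrow> 'c set \<Rightarrow> nat \<Rightarrow> ('a \<Rightarrow> 'c set) \<Rightarrow> bool" where
  "b_fold_oriented_coloring V A S b f \<longleftrightarrow>
     (\<forall>x\<in>V. f x \<subseteq> S \<and> finite (f x) \<and> card (f x) = b) \<and>
     (\<forall>(x, y)\<in>A. f x \<inter> f y = {}) \<and>
     (\<forall>(x, y)\<in>A. \<forall>(z, w)\<in>A. f x \<inter> f w \<noteq> {} \<longrightarrow> f y \<inter> f z = {})"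

end

theory Submission
  imports Defs
begin

text \<open>Write R i j when u_i and u_j share a colour. As k < 4b, among any four vertices
  two share a colour; with conditions (i) and (ii) this forces R i (i + d) to depend on d only,
  so the colouring is described by the set D of distances d with R 0 d. Call p isolated if
  p \<in> D but p - 1, p + 1 \<notin> D. The length r is isolated, every isolated p is a period of D,
  and below the least isolated p the four-point condition forces D to consist of the d with
  d mod 4 \<in> {0, 3}. Hence the least isolated p is 3 mod 4 and divides r.\<close>

locale distance_pattern =
  fixes D :: "nat \<Rightarrow> bool"
  assumes D_0: "D 0"
    and not_D_1: "\<not> D 1"
    and not_D_two_apart: "\<not> (D d \<and> D (d + 2))"
    and D_four: "D a \<or> D (a + x) \<or> D (a + x + y) \<or> D x \<or> D (x + y) \<or> D y"
begin

lemma not_D_2: "\<not> D 2"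
  using not_D_two_apart[of 0] D_0 by (simp add: numeral_2_eq_2)

lemma D_one_of_three: "D e \<or> D (e + 1) \<or> D (e + 2)"
  using D_four[of e 1 1] not_D_1 not_D_2 by (simp add: numeral_2_eq_2)

definition isolated :: "nat \<Rightarrow> bool" where
  "isolated p \<longleftrightarrow> 0 < p \<and> D p \<and> \<not> D (p - 1) \<and> \<not> D (p + 1)"

lemma isolated_ge_3:
  assumes "isolated p"
  shows "3 \<le> p"
proof -
  have "p \<noteq> 0" "p \<noteq> 1" "p \<noteq> 2"
    using assms not_D_1 not_D_2 unfolding isolated_def by auto
  then show ?thesis by linarith
qed

lemma isolated_shift_falling_edge:
  assumes "isolated p" "D m" "\<not> D (m + 1)"
  shows "D (m + p) \<and> \<not> D (m + 1 + p)"
proof -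
  have "p = (p - 2) + 2"
    using isolated_ge_3[OF assms(1)] by simp
  then obtain q where q: "p = q + 2" by blast
  have p: "D p" "\<not> D (q + 1)" "\<not> D (p + 1)"
    using assms(1) q unfolding isolated_def by auto
  have "\<not> D q"
    using not_D_two_apart[of q] p q by simp
  moreover have m2: "\<not> D (m + 2)"
    using not_D_two_apart[of m] assms(2) by simp
  ultimately have fwd: "D (m + p)"
    using D_four[of q 1 "m + 1"] p q assms(3) not_D_1 by (simp add: ac_simps)
  have "\<not> D (m + 1 + p)"
  proof
    assume "D (m + 1 + p)"
    then have "\<not> D (m + 1 + p + 2)"
      using not_D_two_apart by blast
    moreover have "\<not> D (m + p + 2)"
      using not_D_two_apart[of "m + p"] fwd by simp
    ultimately show False
      using D_four[of 1 "m + 1" "p + 1"] not_D_1 m2 assms(3) p(3)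
      by (simp add: ac_simps eval_nat_numeral)
  qed
  with fwd show ?thesis ..
qed

lemma isolated_period:
  assumes "isolated p"
  shows "D (d + p) = D d"
proof (induction d rule: less_induct)
  case (less d)
  consider (zero) "d = 0" | (one) "d = 1" | (step) e where "d = e + 2"
    by (metis One_nat_def add_2_eq_Suc' not0_implies_Suc)
  then show ?case
  proof cases
    case zero
    then show ?thesis using assms D_0 unfolding isolated_def by simp
  next
    case one
    then show ?thesis using assms not_D_1 unfolding isolated_def by (simp add: add.commute)
  next
    case (step e)
    have IH: "D (e + p) = D e" "D (e + 1 + p) = D (e + 1)"
      using less.IH[of e] less.IH[of "e + 1"] step by simp_all
    consider "D (e + 1)" "D (e + 2)" | "D (e + 1)" "\<not> D (e + 2)"
      | "\<not> D (e + 1)" "D (e + 2)" | "\<not> D (e + 1)" "\<not> D (e + 2)" by blast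
    then show ?thesis
    proof cases
      case 1
      then have "\<not> D (e + 2 + 1)"
        using not_D_two_apart[of "e + 1"] by (simp add: ac_simps)
      then show ?thesis using isolated_shift_falling_edge[OF assms, of "e + 2"] 1 step by simp
    next
      case 2
      then show ?thesis using isolated_shift_falling_edge[OF assms, of "e + 1"] step by (simp add: ac_simps)
    next
      case 3
      then have "\<not> D e" using not_D_two_apart[of e] by blast
      then show ?thesis using D_one_of_three[of "e + p"] IH 3 step by (simp add: ac_simps)
    next
      case 4
      then have "D e" using D_one_of_three[of e] by blast
      then show ?thesis using not_D_two_apart[of "e + p"] IH 4 step by (simp add: ac_simps)
    qed
  qed
qed

lemma isolated_period_mult:
  assumes "isolated p"
  shows "D (d + j * p) = D d"
proof (induction j)
  case (Suc j)
  have "D (d + Suc j * p) = D (d + j * p + p)"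
    by (simp add: algebra_simps)
  with Suc show ?case
    using isolated_period[OF assms] by simp
qed simp

lemma isolated_mod:
  assumes "isolated p" "isolated n" "0 < n mod p"
  shows "isolated (n mod p)"
proof -
  have "n + d = (n mod p + d) + n div p * p" for d
    by simp
  then have shift: "D (n mod p + d) = D (n + d)" for d
    using isolated_period_mult[OF assms(1)] by presburger
  have "n - 1 = (n mod p - 1) + n div p * p"
    using assms(3) div_mult_mod_eq[of n p] by linarith
  then have "D (n mod p - 1) = D (n - 1)"
    using isolated_period_mult[OF assms(1)] by presburger
  then show ?thesis
    using assms(2,3) shift[of 0] shift[of 1] unfolding isolated_def by simp
qed

lemma D_recurrence: "\<not> isolated (e + 2) \<Longrightarrow> D (e + 3) = (\<not> D (e + 1))"
  using not_D_two_apart[of "e + 1"] D_one_of_three[of "e + 1"]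
  unfolding isolated_def by (auto simp: ac_simps eval_nat_numeral)

lemma D_below_least_isolated:
  assumes least: "\<And>m. isolated m \<Longrightarrow> p \<le> m" and "d < p"
  shows "D d = (d mod 4 = 0 \<or> d mod 4 = 3)"
  using \<open>d < p\<close>
proof (induction d rule: less_induct)
  case (less d)
  show ?case
  proof (cases "d < 3")
    case True
    then have "d = 0 \<or> d = 1 \<or> d = 2" by auto
    then show ?thesis using D_0 not_D_1 not_D_2 by auto
  next
    case False
    then obtain e where d: "d = e + 3"
      by (metis add.commute le_Suc_ex not_less)
    have "\<not> isolated (e + 2)"
      using least less.prems d by fastforce
    then have "D d = (\<not> D (e + 1))"
      using D_recurrence d by simp
    moreover have "D (e + 1) = ((e + 1) mod 4 = 0 \<or> (e + 1) mod 4 = 3)"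
      using less.IH less.prems d by simp
    moreover have "(d mod 4 = 0 \<or> d mod 4 = 3) = (\<not> ((e + 1) mod 4 = 0 \<or> (e + 1) mod 4 = 3))"
      using d by presburger
    ultimately show ?thesis
      by simp
  qed
qed

lemma least_isolated_mod_4:
  assumes "isolated p" and least: "\<And>m. isolated m \<Longrightarrow> p \<le> m"
  shows "p mod 4 = 3"
proof -
  have "p = (p - 3) + 3"
    using isolated_ge_3[OF assms(1)] by simp
  then obtain e where e: "p = e + 3" by blast
  have "\<not> D (e + 2)" "\<not> D (e + 1)"
    using assms(1) not_D_two_apart[of "e + 1"] unfolding isolated_def e
    by (simp_all add: eval_nat_numeral)
  then have "\<not> ((e + 2) mod 4 = 0 \<or> (e + 2) mod 4 = 3)" "\<not> ((e + 1) mod 4 = 0 \<or> (e + 1) mod 4 = 3)"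
    using D_below_least_isolated[OF least, of "e + 2"] D_below_least_isolated[OF least, of "e + 1"] e
    by simp_all
  then show ?thesis
    unfolding e by presburger
qed

theorem isolated_has_divisor_3_mod_4: "isolated n \<Longrightarrow> \<exists>q. (4 * q + 3) dvd n"
proof -
  assume n: "isolated n"
  obtain p where p: "isolated p" and least: "\<And>m. isolated m \<Longrightarrow> p \<le> m"
    using n by (metis LeastI Least_le)
  have "n mod p = 0"
  proof (rule ccontr)
    assume "n mod p \<noteq> 0"
    then have "p \<le> n mod p"
      using isolated_mod[OF p n] least by simp
    moreover have "n mod p < p"
      using isolated_ge_3[OF p] by simp
    ultimately show False by simp
  qed
  moreover have "p = 4 * (p div 4) + 3"
    using least_isolated_mod_4[OF p least] by presburger
  ultimately show ?thesis
    by (metis mod_0_imp_dvd)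
qed

end

locale cycle_overlap_relation =
  fixes r :: nat and R :: "nat \<Rightarrow> nat \<Rightarrow> bool"
  assumes period_pos: "0 < r"
    and R_mod: "R i j = R (i mod r) (j mod r)"
    and R_refl: "R i i"
    and R_sym: "R i j \<Longrightarrow> R j i"
    and not_R_Suc: "\<not> R i (Suc i)"
    and not_R_cross: "\<not> (R a (Suc c) \<and> R (Suc a) c)"
    and R_four: "R w x \<or> R w y \<or> R w z \<or> R x y \<or> R x z \<or> R y z"
begin

lemma R_add_mult_period: "R (i + m * r) (j + n * r) = R i j"
  using R_mod[of i j] R_mod[of "i + m * r" "j + n * r"] by simp

lemma not_R_Suc_Suc: "\<not> R i (Suc (Suc i))"
  using not_R_cross[of i "Suc i"] R_refl[of "Suc i"] by simp

lemma R_Suc_Suc: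
  assumes "R i y" "R (Suc i) y"
  shows "R (Suc i) (Suc y)"
proof (rule ccontr)
  assume contra: "\<not> R (Suc i) (Suc y)"
  \<comment> \<open>the predecessor of i modulo r; i - 1 would truncate at i = 0\<close>
  define x where "x = i + r - 1"
  have x: "Suc x = i + 1 * r" "Suc (Suc x) = Suc i + 1 * r"
    using period_pos unfolding x_def by simp_all
  have "R (Suc x) y" "R (Suc (Suc x)) y" "\<not> R (Suc (Suc x)) (Suc y)"
    using assms contra R_add_mult_period[of i 1 y 0] R_add_mult_period[of "Suc i" 1 y 0]
      R_add_mult_period[of "Suc i" 1 "Suc y" 0]
    unfolding x by simp_all
  then have "\<not> R x (Suc y)" "\<not> R (Suc x) (Suc y)"
    using not_R_cross by blast+
  then show False
    using R_four[of x "Suc x" "Suc (Suc x)" "Suc y"] not_R_Suc[of x] not_R_Suc[of "Suc x"]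
      not_R_Suc_Suc[of x] \<open>\<not> R (Suc (Suc x)) (Suc y)\<close> by blast
qed

lemma R_shift_forward:
  assumes "R i (i + d)" and step: "\<And>i. R i (i + d) \<Longrightarrow> R (Suc i) (Suc i + d)"
  shows "R (i + j) (i + j + d)"
proof (induction j)
  case (Suc j)
  then show ?case
    using step[of "i + j"] by simp
qed (simp add: assms(1))

lemma R_shift_uniform:
  assumes step: "\<And>i. R i (i + d) \<Longrightarrow> R (Suc i) (Suc i + d)"
  shows "R i (i + d) = R 0 d"
proof
  assume "R i (i + d)"
  moreover have "i + i * (r - 1) = 0 + i * r"
    using period_pos by (simp add: algebra_simps)
  ultimately have "R (0 + i * r) (d + i * r)"
    using R_shift_forward[OF _ step, of i "i * (r - 1)"] by (simp add: ac_simps)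
  then show "R 0 d"
    by (simp only: R_add_mult_period)
next
  assume "R 0 d"
  then show "R i (i + d)"
    using R_shift_forward[OF _ step, of 0 i] by simp
qed

lemma R_shift_invariant: "R i (i + d) = R 0 d"
proof (induction d arbitrary: i rule: less_induct)
  case (less d)
  consider (zero) "d = 0" | (one) "d = 1" | (step) e where "d = e + 2"
    by (metis One_nat_def add_2_eq_Suc' not0_implies_Suc)
  then show ?case
  proof cases
    case zero
    then show ?thesis using R_refl by simp
  next
    case one
    then show ?thesis using not_R_Suc by simp
  next
    case (step e)
    have IH: "R j (j + e) = R 0 e" "R j (j + Suc e) = R 0 (Suc e)" for j
      using less.IH[of e] less.IH[of "Suc e"] step by simp_all
    consider (propagating) "R 0 (Suc e)" | (absent) "\<not> R 0 (Suc e)" "R 0 e"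
      | (forced) "\<not> R 0 (Suc e)" "\<not> R 0 e" by blast
    then show ?thesis
    proof cases
      case propagating
      have "R (Suc j) (Suc j + d)" if "R j (j + d)" for j
        using R_Suc_Suc[OF that] IH(2)[of "Suc j"] propagating step by simp
      then show ?thesis by (rule R_shift_uniform)
    next
      case absent
      have "\<not> R j (j + d)" for j
        using not_R_cross[of j "Suc j + e"] IH(1)[of "Suc j"] absent step by simp
      from this[of i] this[of 0] show ?thesis by simp
    next
      case forced
      have "R j (j + d)" for j
        using R_four[of j "j + e" "j + Suc e" "j + d"] IH[of j] forced step
          not_R_Suc[of "j + e"] not_R_Suc[of "j + Suc e"] not_R_Suc_Suc[of "j + e"]
        by (simp add: eval_nat_numeral)
      from this[of i] this[of 0] show ?thesis by simp
    qed
  qed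
qed

end

sublocale cycle_overlap_relation \<subseteq> distance_pattern "R 0"
proof
  show "R 0 0" by (rule R_refl)
  show "\<not> R 0 1" using not_R_Suc[of 0] by simp
  show "\<not> (R 0 d \<and> R 0 (d + 2))" for d
    using not_R_cross[of 0 "Suc d"] R_shift_invariant[of 1 d] by (auto simp: eval_nat_numeral)
  show "R 0 a \<or> R 0 (a + x) \<or> R 0 (a + x + y) \<or> R 0 x \<or> R 0 (x + y) \<or> R 0 y" for a x y
    using R_four[of 0 a "a + x" "a + x + y"] R_shift_invariant[of a x]
      R_shift_invariant[of a "x + y"] R_shift_invariant[of "a + x" y]
    by (simp add: add.assoc)
qed

context cycle_overlap_relation
begin

lemma isolated_period_length: "isolated r"
proof -
  have "R 0 (r - 1) = R (r - 1) 0"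
    using R_sym by blast
  also have "\<dots> = R (r - 1) r"
    using R_add_mult_period[of "r - 1" 0 0 1] by simp
  also have "\<dots> = R (r - 1) (Suc (r - 1))"
    using period_pos by simp
  finally have "\<not> R 0 (r - 1)"
    using not_R_Suc by simp
  then show ?thesis
    using period_pos R_refl[of 0] not_R_Suc[of 0]
      R_add_mult_period[of 0 0 0 1] R_add_mult_period[of 0 0 1 1]
    unfolding isolated_def by simp
qed

lemma period_has_divisor_3_mod_4: "\<exists>q. (4 * q + 3) dvd r"
  using isolated_has_divisor_3_mod_4[OF isolated_period_length] .

end

definition share_colour :: "nat \<Rightarrow> (nat \<Rightarrow> 'c set) \<Rightarrow> nat \<Rightarrow> nat \<Rightarrow> bool" where
  "share_colour r f i j \<longleftrightarrow> f (i mod r) \<inter> f (j mod r) \<noteq> {}"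

lemma card_four_disjoint_le:
  assumes "finite S" "A \<subseteq> S" "B \<subseteq> S" "C \<subseteq> S" "E \<subseteq> S"
    and "A \<inter> B = {}" "A \<inter> C = {}" "A \<inter> E = {}" "B \<inter> C = {}" "B \<inter> E = {}" "C \<inter> E = {}"
  shows "card A + card B + card C + card E \<le> card S"
proof -
  have "finite A" "finite B" "finite C" "finite E"
    using assms(1-5) finite_subset by blast+
  then have "card (A \<union> B \<union> C \<union> E) = card A + card B + card C + card E"
    using assms(6-11) by (simp add: card_Un_disjoint Int_Un_distrib2)
  moreover have "card (A \<union> B \<union> C \<union> E) \<le> card S"
    using assms(1-5) by (intro card_mono) auto
  ultimately show ?thesis by simp
qed

lemma oriented_coloring_cycle_overlap_relation:
  assumes col: "b_fold_oriented_coloring (cycle_vertices r) (cycle_arcs r) {..<k} b f"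
    and "0 < r" "0 < b" "k < 4 * b"
  shows "cycle_overlap_relation r (share_colour r f)"
proof
  have colours: "f (i mod r) \<subseteq> {..<k}" "card (f (i mod r)) = b" for i
    using col \<open>0 < r\<close> unfolding b_fold_oriented_coloring_def cycle_vertices_def by auto
  have arc: "(i mod r, Suc i mod r) \<in> cycle_arcs r" for i
    using \<open>0 < r\<close> unfolding cycle_arcs_def by (auto simp: mod_Suc_eq)
  show "0 < r" by fact
  show "share_colour r f i j = share_colour r f (i mod r) (j mod r)" for i j
    unfolding share_colour_def by simp
  show "share_colour r f i i" for i
    using colours(2)[of i] \<open>0 < b\<close> unfolding share_colour_def by auto
  show "share_colour r f i j \<Longrightarrow> share_colour r f j i" for i j
    unfolding share_colour_def by blast
  show "\<not> share_colour r f i (Suc i)" for i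
    using col arc[of i] unfolding b_fold_oriented_coloring_def share_colour_def by blast
  show "\<not> (share_colour r f a (Suc c) \<and> share_colour r f (Suc a) c)" for a c
    using col arc[of a] arc[of c] unfolding b_fold_oriented_coloring_def share_colour_def by blast
  show "share_colour r f w x \<or> share_colour r f w y \<or> share_colour r f w z \<or>
      share_colour r f x y \<or> share_colour r f x z \<or> share_colour r f y z" for w x y z
  proof (rule ccontr)
    assume "\<not> ?thesis"
    then have "4 * b \<le> card {..<k}"
      using card_four_disjoint_le[of "{..<k}" "f (w mod r)" "f (x mod r)" "f (y mod r)" "f (z mod r)"]
        colours unfolding share_colour_def by simp
    with \<open>k < 4 * b\<close> show False by simp
  qed
qed

theorem lemma8:
  fixes r b k :: nat
  assumes "r > 5" and "\<not> (3 dvd r)"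
    and "b > 0" and "k > 0" and "k < 4 * b"
    and "\<exists>f :: nat \<Rightarrow> nat set.
           b_fold_oriented_coloring (cycle_vertices r) (cycle_arcs r) {..<k} b f"
  shows "\<exists>q :: nat. (4 * q + 3) dvd r"
proof -
  obtain f :: "nat \<Rightarrow> nat set" where
    "b_fold_oriented_coloring (cycle_vertices r) (cycle_arcs r) {..<k} b f"
    using assms(6) by blast
  then interpret cycle_overlap_relation r "share_colour r f"
    using assms(1,3,5) by (intro oriented_coloring_cycle_overlap_relation) simp_all
  show ?thesis by (rule period_has_divisor_3_mod_4)
qed

end
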